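(* The generic offset polynomial satisfies $g\in\mathbb C[\bar x][d^2]$, i.e. only even powers of $d$ occur in $g(d,\bar x)$.
   Context: Let $f\in\mathbb C[y_1,y_2,y_3]$ be irreducible, defining a surface $\Sigma$; $f_i=\partial f/\partial y_i$, $h_{\rm imp}=\sum f_i^2$, not identically zero on $\Sigma$. The generic offset $\mathcal O_d(\Sigma)\subset\mathbb C^4$ is the Zariski closure of the projection to $(d,\bar x)$ of the solution set in $(d,\bar x,\bar y,u)$ of: $f(\bar y)=0$; $f_i(\bar y)(x_j-y_j)-f_j(\bar y)(x_i-y_i)=0$ ($i<j$); $\sum_i(x_i-y_i)^2-d^2=0$; $u\,h_{\rm imp}(\bar y)-1=0$. It is a hypersurface whose square-free defining polynomial (defined up to a nonzero constant) is the generic offset polynomial $g(d,\bar x)$. *)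

theory Defs
  imports "HOL-Computational_Algebra.Computational_Algebra"
begin

text \<open>Multivariate polynomials are encoded as nested univariate polynomials.
  A polynomial in C[y1,y2,y3] is a term of type complex poly poly poly, with
  y1 the outermost and y3 the innermost variable.  A polynomial in C[d,x1,x2,x3]
  is a term of type complex poly poly poly poly, with d the outermost variable,
  so its coefficients (coeff g k) are the polynomials in C[x1,x2,x3] multiplying d^k.\<close>

type_synonym mpoly3 = "complex poly poly poly"
type_synonym mpoly4 = "complex poly poly poly poly"

definition ev3 :: "mpoly3 \<Rightarrow> complex \<Rightarrow> complex \<Rightarrow> complex \<Rightarrow> complex" where
  "ev3 f y1 y2 y3 = poly (map_poly (\<lambda>q. poly (map_poly (\<lambda>r. poly r y3) q) y2) f) y1"

definition ev4 :: "mpoly4 \<Rightarrow> complex \<Rightarrow> complex \<Rightarrow> complex \<Rightarrow> complex \<Rightarrow> complex" where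
  "ev4 g d x1 x2 x3 = poly (map_poly (\<lambda>p. ev3 p x1 x2 x3) g) d"

definition pd1 :: "mpoly3 \<Rightarrow> mpoly3" where "pd1 f = pderiv f"
definition pd2 :: "mpoly3 \<Rightarrow> mpoly3" where "pd2 f = map_poly pderiv f"
definition pd3 :: "mpoly3 \<Rightarrow> mpoly3" where "pd3 f = map_poly (map_poly pderiv) f"

definition h_imp :: "mpoly3 \<Rightarrow> mpoly3" where
  "h_imp f = (pd1 f)^2 + (pd2 f)^2 + (pd3 f)^2"

definition offset_incidence :: "mpoly3 \<Rightarrow> (complex \<times> complex \<times> complex \<times> complex) set" where
  "offset_incidence f = {(d, x1, x2, x3). \<exists>y1 y2 y3 u.
     ev3 f y1 y2 y3 = 0 \<and>
     ev3 (pd1 f) y1 y2 y3 * (x2 - y2) - ev3 (pd2 f) y1 y2 y3 * (x1 - y1) = 0 \<and>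
     ev3 (pd1 f) y1 y2 y3 * (x3 - y3) - ev3 (pd3 f) y1 y2 y3 * (x1 - y1) = 0 \<and>
     ev3 (pd2 f) y1 y2 y3 * (x3 - y3) - ev3 (pd3 f) y1 y2 y3 * (x2 - y2) = 0 \<and>
     (x1 - y1)^2 + (x2 - y2)^2 + (x3 - y3)^2 - d^2 = 0 \<and>
     u * ev3 (h_imp f) y1 y2 y3 - 1 = 0}"

definition zero_set4 :: "mpoly4 \<Rightarrow> (complex \<times> complex \<times> complex \<times> complex) set" where
  "zero_set4 g = {(d, x1, x2, x3). ev4 g d x1 x2 x3 = 0}"

definition zariski_closure4 :: "(complex \<times> complex \<times> complex \<times> complex) set \<Rightarrow> (complex \<times> complex \<times> complex \<times> complex) set" where
  "zariski_closure4 S = {z. \<forall>p. S \<subseteq> zero_set4 p \<longrightarrow> z \<in> zero_set4 p}"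

definition generic_offset :: "mpoly3 \<Rightarrow> (complex \<times> complex \<times> complex \<times> complex) set" where
  "generic_offset f = zariski_closure4 (offset_incidence f)"

end

theory Submission
  imports Defs "HOL-Computational_Algebra.Field_as_Ring"
begin

(* The offset incidence set is symmetric under d |-> -d, so g(-d, x) vanishes on it,
   hence on its Zariski closure, which is the zero set of g.  A Nullstellensatz for the
   squarefree polynomial g then gives g | g(-d, x); comparing degrees and leading
   coefficients, g(-d, x) = (-1)^(deg g) g(d, x), so g is either even or odd in d.  If g were
   odd, then g = d h.  Points of the incidence set with d = 0 are limits, along the normal
   line to the surface, of incidence points with d <> 0; by continuity h vanishes on the
   incidence set too, so g | h, which is impossible as deg h < deg g. *)

section \<open>Evaluation families\<close>

definition eval_hom :: "('a::comm_ring_1 \<Rightarrow> 'p \<Rightarrow> complex) \<Rightarrow> bool" where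
  "eval_hom E \<longleftrightarrow> (\<forall>pt. E 0 pt = 0 \<and> E 1 pt = 1 \<and>
     (\<forall>a b. E (a + b) pt = E a pt + E b pt \<and> E (a * b) pt = E a pt * E b pt))"

definition faithful :: "('a::comm_ring_1 \<Rightarrow> 'p \<Rightarrow> complex) \<Rightarrow> bool" where
  "faithful E \<longleftrightarrow> (\<forall>a. a \<noteq> 0 \<longrightarrow> (\<exists>pt. E a pt \<noteq> 0))"

definition irreducible_nullstellensatz :: "('a::comm_ring_1 \<Rightarrow> 'p \<Rightarrow> complex) \<Rightarrow> bool" where
  "irreducible_nullstellensatz E \<longleftrightarrow>
     (\<forall>q p. irreducible q \<longrightarrow> (\<forall>pt. E q pt = 0 \<longrightarrow> E p pt = 0) \<longrightarrow> q dvd p)"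

definition lift_eval :: "('a::comm_ring_1 \<Rightarrow> 'p \<Rightarrow> complex) \<Rightarrow> 'a poly \<Rightarrow> 'p \<times> complex \<Rightarrow> complex" where
  "lift_eval E p pt = poly (map_poly (\<lambda>c. E c (fst pt)) p) (snd pt)"

lemma map_poly_add_hom:
  assumes "h 0 = 0" "\<And>a b. h (a + b) = h a + h b"
  shows "map_poly h (p + q) = map_poly h p + map_poly h q"
  by (intro poly_eqI) (simp add: coeff_map_poly assms)

lemma map_poly_mult_hom:
  fixes h :: "'a::comm_ring_1 \<Rightarrow> 'b::comm_ring_1"
  assumes "h 0 = 0" "\<And>a b. h (a + b) = h a + h b" "\<And>a b. h (a * b) = h a * h b"
  shows "map_poly h (p * q) = map_poly h p * map_poly h q"
proof (induction p)
  case (pCons a p)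
  have "map_poly h (pCons a p * q) = map_poly h (smult a q) + map_poly h (pCons 0 (p * q))"
    by (simp add: map_poly_add_hom assms)
  also have "\<dots> = smult (h a) (map_poly h q) + pCons 0 (map_poly h p * map_poly h q)"
    using pCons by (simp add: map_poly_smult map_poly_pCons assms)
  also have "\<dots> = map_poly h (pCons a p) * map_poly h q"
    by (simp add: map_poly_pCons assms)
  finally show ?case .
qed simp

lemma eval_homD:
  assumes "eval_hom E"
  shows "E 0 pt = 0" "E 1 pt = 1" "E (a + b) pt = E a pt + E b pt" "E (a * b) pt = E a pt * E b pt"
  using assms unfolding eval_hom_def by auto

lemma eval_hom_uminus:
  assumes "eval_hom E"
  shows "E (- a) pt = - E a pt"
proof -
  have "E (a + - a) pt = E a pt + E (- a) pt" by (rule eval_homD(3)[OF assms])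
  then show ?thesis by (simp add: eval_homD(1)[OF assms] add_eq_0_iff)
qed

lemma eval_hom_power:
  assumes "eval_hom E"
  shows "E (a ^ n) pt = E a pt ^ n"
  by (induction n) (simp_all add: eval_homD[OF assms])

lemma eval_hom_lift:
  assumes "eval_hom E"
  shows "eval_hom (lift_eval E)"
  unfolding eval_hom_def lift_eval_def
  by (simp add: map_poly_add_hom map_poly_mult_hom eval_homD[OF assms])

lemma lift_eval_const:
  assumes "eval_hom E"
  shows "lift_eval E [:a:] pt = E a (fst pt)"
  unfolding lift_eval_def by (simp add: map_poly_pCons eval_homD[OF assms])

text \<open>Faithfulness lifts: a nonzero polynomial has a point where its leading
  coefficient survives, and a nonzero complex polynomial has a non-root.\<close>
lemma faithful_lift:
  assumes hom: "eval_hom E" and faith: "faithful E"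
  shows "faithful (lift_eval E)"
  unfolding faithful_def
proof (intro allI impI)
  fix p :: "'a poly"
  assume "p \<noteq> 0"
  then have "lead_coeff p \<noteq> 0" by simp
  then obtain pt where pt: "E (lead_coeff p) pt \<noteq> 0"
    using faith unfolding faithful_def by blast
  then have "coeff (map_poly (\<lambda>c. E c pt) p) (degree p) \<noteq> 0"
    by (simp add: coeff_map_poly eval_homD(1)[OF hom])
  then have "map_poly (\<lambda>c. E c pt) p \<noteq> 0" by auto
  then obtain z where "poly (map_poly (\<lambda>c. E c pt) p) z \<noteq> 0"
    using poly_all_0_iff_0 by blast
  then show "\<exists>x. lift_eval E p x \<noteq> 0"
    unfolding lift_eval_def by (intro exI[of _ "(pt, z)"]) simp
qed

section \<open>A nonzero constant in the ideal of two coprime polynomials\<close>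

definition ideal2 :: "'a::comm_ring_1 \<Rightarrow> 'a \<Rightarrow> 'a set" where
  "ideal2 q p = {A * q + B * p | A B. True}"

lemma ideal2_generators: "q \<in> ideal2 q p" "p \<in> ideal2 q p"
proof -
  have "q = 1 * q + 0 * p" "p = 0 * q + 1 * p" by simp_all
  then show "q \<in> ideal2 q p" "p \<in> ideal2 q p" unfolding ideal2_def by blast+
qed

text \<open>Over an integral domain, a nonzero element of minimal degree in the ideal
  \<open>(q, p)\<close> divides a nonzero scalar multiple of every element of that ideal
  (by pseudo-division, whose remainder stays in the ideal).\<close>
lemma min_degree_divides_ideal2:
  fixes q p s :: "'a::idom poly"
  assumes s_in: "s \<in> ideal2 q p" and s_nz: "s \<noteq> 0"
    and s_min: "\<And>t. t \<in> ideal2 q p \<Longrightarrow> t \<noteq> 0 \<Longrightarrow> degree s \<le> degree t"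
    and t_in: "t \<in> ideal2 q p"
  shows "\<exists>a. a \<noteq> 0 \<and> s dvd smult a t"
proof -
  define r where "r = pseudo_mod t s"
  obtain a Q where a_nz: "a \<noteq> 0" and div: "smult a t = s * Q + r"
    using pseudo_mod(1)[OF s_nz, of t] unfolding r_def by blast
  have r_small: "r = 0 \<or> degree r < degree s"
    using pseudo_mod(2)[OF s_nz, of t] unfolding r_def by blast
  obtain A1 B1 A2 B2 where t: "t = A1 * q + B1 * p" and s: "s = A2 * q + B2 * p"
    using s_in t_in unfolding ideal2_def by blast
  have "r = (smult a A1 - A2 * Q) * q + (smult a B1 - B2 * Q) * p"
    using div unfolding t s by (simp add: algebra_simps smult_add_right)
  then have "r \<in> ideal2 q p" unfolding ideal2_def by blast
  then have "r = 0" using s_min[of r] r_small by linarith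
  then have "s dvd smult a t" using div by simp
  with a_nz show ?thesis by blast
qed

text \<open>A polynomial dividing nonzero scalar multiples of both \<open>q\<close> and \<open>p\<close>, where
  \<open>q\<close> is irreducible of positive degree and does not divide \<open>p\<close>, is constant:
  if \<open>q\<close> divides it, \<open>q\<close> would divide \<open>b p\<close>, hence \<open>p\<close>; otherwise \<open>q\<close> divides
  the cofactor in \<open>a q = s Q\<close>, which forces \<open>deg s = 0\<close>.\<close>
lemma scalar_common_divisor_const:
  fixes q p s :: "'a::{factorial_ring_gcd,semiring_gcd_mult_normalize} poly"
  assumes q_irr: "irreducible q" and q_deg: "degree q \<noteq> 0" and q_ndvd: "\<not> q dvd p"
    and s_nz: "s \<noteq> 0"
    and a_nz: "a \<noteq> 0" and s_dvd_q: "s dvd smult a q"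
    and b_nz: "b \<noteq> 0" and s_dvd_p: "s dvd smult b p"
  shows "degree s = 0"
proof -
  have q_prime: "prime_elem q" using q_irr by (simp add: prime_elem_iff_irreducible)
  from s_dvd_q obtain Q where Q: "smult a q = s * Q" by (rule dvdE)
  have "q dvd s * Q" unfolding Q[symmetric] by (simp add: dvd_smult)
  then consider "q dvd s" | "q dvd Q" using prime_elem_dvd_multD[OF q_prime] by blast
  then show ?thesis
  proof cases
    case 1
    have "q dvd smult b p" using 1 s_dvd_p by (rule dvd_trans)
    then have "q dvd [:b:] \<or> q dvd p" using prime_elem_dvd_multD[OF q_prime, of "[:b:]" p] by simp
    moreover have "\<not> q dvd [:b:]"
    proof
      assume "q dvd [:b:]"
      then have "degree q \<le> degree [:b:]" by (rule dvd_imp_degree_le) (simp add: b_nz)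
      with q_deg show False by simp
    qed
    ultimately show ?thesis using q_ndvd by blast
  next
    case 2
    have "Q \<noteq> 0" using Q a_nz q_irr by auto
    have "degree q = degree (smult a q)" using a_nz by simp
    also have "\<dots> = degree s + degree Q" unfolding Q using s_nz \<open>Q \<noteq> 0\<close> by (rule degree_mult_eq)
    finally have "degree q = degree s + degree Q" .
    moreover have "degree q \<le> degree Q" using 2 \<open>Q \<noteq> 0\<close> by (rule dvd_imp_degree_le)
    ultimately show ?thesis by simp
  qed
qed

text \<open>If \<open>q\<close> is irreducible of positive degree and does not divide \<open>p\<close>, then
  the ideal \<open>(q, p)\<close> contains a nonzero constant, namely any nonzero element of
  minimal degree.  This is what survives of the Bezout identity over a
  coefficient ring that is not a field.\<close>
lemma ideal2_contains_constant:
  fixes q p :: "'a::{factorial_ring_gcd,semiring_gcd_mult_normalize} poly"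
  assumes q_irr: "irreducible q" and q_deg: "degree q \<noteq> 0" and q_ndvd: "\<not> q dvd p"
  obtains c where "c \<noteq> 0" "[:c:] \<in> ideal2 q p"
proof -
  have "q \<noteq> 0" using q_irr by auto
  then obtain s where s_in: "s \<in> ideal2 q p" and s_nz: "s \<noteq> 0"
    and s_min: "\<And>t. t \<in> ideal2 q p \<Longrightarrow> t \<noteq> 0 \<Longrightarrow> degree s \<le> degree t"
    using ex_has_least_nat[of "\<lambda>t. t \<in> ideal2 q p \<and> t \<noteq> 0" q degree]
      ideal2_generators(1) by blast
  obtain a where "a \<noteq> 0" "s dvd smult a q"
    using min_degree_divides_ideal2[OF s_in s_nz s_min ideal2_generators(1)] by blast
  moreover obtain b where "b \<noteq> 0" "s dvd smult b p"
    using min_degree_divides_ideal2[OF s_in s_nz s_min ideal2_generators(2)] by blast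
  ultimately have "degree s = 0"
    using scalar_common_divisor_const[OF q_irr q_deg q_ndvd s_nz] by blast
  then obtain c where s_const: "s = [:c:]" by (metis degree_0_id)
  then have "c \<noteq> 0" using s_nz by simp
  moreover have "[:c:] \<in> ideal2 q p" using s_in s_const by simp
  ultimately show ?thesis by (rule that)
qed

section \<open>Lifting the Nullstellensatz through a polynomial extension\<close>

lemma nullstellensatz_lift_const:
  fixes E :: "'a::factorial_ring_gcd \<Rightarrow> 'p \<Rightarrow> complex"
  assumes hom: "eval_hom E" and ns: "irreducible_nullstellensatz E"
    and a_irr: "irreducible [:a:]"
    and zeros: "\<forall>x. lift_eval E [:a:] x = 0 \<longrightarrow> lift_eval E p x = 0"
  shows "[:a:] dvd p"
proof -
  have "a dvd coeff p n" for n
  proof -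
    have "E (coeff p n) pt = 0" if "E a pt = 0" for pt
    proof -
      have "poly (map_poly (\<lambda>c. E c pt) p) z = 0" for z
        using zeros that lift_eval_const[OF hom, of a "(pt, z)"] unfolding lift_eval_def by auto
      then have "map_poly (\<lambda>c. E c pt) p = 0" using poly_all_0_iff_0 by blast
      then show ?thesis by (metis coeff_0 coeff_map_poly eval_homD(1)[OF hom])
    qed
    moreover have "irreducible a" using a_irr irreducible_const_poly_iff by blast
    ultimately show ?thesis using ns unfolding irreducible_nullstellensatz_def by blast
  qed
  then show ?thesis using const_poly_dvd_iff by blast
qed

text \<open>Nonconstant irreducibles: if \<open>q\<close> does not divide \<open>p\<close>, a nonzero constant \<open>c = A q + B p\<close>
  exists; at a base point where both \<open>c\<close> and the leading coefficient of \<open>q\<close>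
  survive, the specialisation of \<open>q\<close> has a root (algebraic closedness),
  which is a common zero of \<open>q\<close> and \<open>p\<close> but not of \<open>c\<close>.\<close>
lemma nullstellensatz_lift_nonconst:
  fixes E :: "'a::{factorial_ring_gcd,semiring_gcd_mult_normalize} \<Rightarrow> 'p \<Rightarrow> complex"
  assumes hom: "eval_hom E" and faith: "faithful E"
    and q_irr: "irreducible q" and q_deg: "degree q \<noteq> 0"
    and zeros: "\<forall>x. lift_eval E q x = 0 \<longrightarrow> lift_eval E p x = 0"
  shows "q dvd p"
proof (rule ccontr)
  assume "\<not> q dvd p"
  then obtain c where c_nz: "c \<noteq> 0" and "[:c:] \<in> ideal2 q p"
    using ideal2_contains_constant q_irr q_deg by blast
  then obtain A B where comb: "[:c:] = A * q + B * p" unfolding ideal2_def by blast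
  have "c * lead_coeff q \<noteq> 0" using c_nz q_irr by auto
  then obtain pt where "E (c * lead_coeff q) pt \<noteq> 0"
    using faith unfolding faithful_def by blast
  then have c_pt: "E c pt \<noteq> 0" and lc_pt: "E (lead_coeff q) pt \<noteq> 0"
    by (simp_all add: eval_homD(4)[OF hom])
  have "degree (map_poly (\<lambda>c. E c pt) q) = degree q"
    using lc_pt by (rule map_poly_degree_eq)
  then obtain z where "poly (map_poly (\<lambda>c. E c pt) q) z = 0"
    using q_deg alg_closed_imp_poly_has_root by force
  then have "lift_eval E q (pt, z) = 0" unfolding lift_eval_def by simp
  moreover from this have "lift_eval E p (pt, z) = 0" using zeros by blast
  ultimately have "lift_eval E (A * q + B * p) (pt, z) = 0"
    using eval_homD[OF eval_hom_lift[OF hom]] by simp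
  then have "E c pt = 0" using comb lift_eval_const[OF hom, of c "(pt, z)"] by simp
  with c_pt show False by contradiction
qed

definition complete_eval :: "('a::comm_ring_1 \<Rightarrow> 'p \<Rightarrow> complex) \<Rightarrow> bool" where
  "complete_eval E \<longleftrightarrow> eval_hom E \<and> faithful E \<and> irreducible_nullstellensatz E"

lemma complete_eval_lift:
  fixes E :: "'a::{factorial_ring_gcd,semiring_gcd_mult_normalize} \<Rightarrow> 'p \<Rightarrow> complex"
  assumes "complete_eval E"
  shows "complete_eval (lift_eval E)"
proof -
  have hom: "eval_hom E" and faith: "faithful E" and ns: "irreducible_nullstellensatz E"
    using assms unfolding complete_eval_def by auto
  have "irreducible_nullstellensatz (lift_eval E)"
    unfolding irreducible_nullstellensatz_def
  proof (intro allI impI)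
    fix q p :: "'a poly"
    assume q_irr: "irreducible q" and zeros: "\<forall>x. lift_eval E q x = 0 \<longrightarrow> lift_eval E p x = 0"
    show "q dvd p"
    proof (cases "degree q = 0")
      case True
      then obtain a where "q = [:a:]" by (metis degree_0_id)
      then show ?thesis using nullstellensatz_lift_const[OF hom ns] q_irr zeros by blast
    next
      case False
      then show ?thesis using nullstellensatz_lift_nonconst[OF hom faith q_irr] zeros by blast
    qed
  qed
  then show ?thesis
    unfolding complete_eval_def using eval_hom_lift[OF hom] faithful_lift[OF hom faith] by blast
qed

text \<open>For a complete evaluation family, a squarefree element divides every element
  vanishing on its zero set: each prime factor of \<open>g\<close> occurs once and divides \<open>p\<close>.\<close>
lemma squarefree_nullstellensatz:
  fixes E :: "'a::{factorial_semiring,comm_ring_1} \<Rightarrow> 'p \<Rightarrow> complex"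
  assumes "complete_eval E" and g_sqfree: "squarefree g"
    and zeros: "\<forall>pt. E g pt = 0 \<longrightarrow> E p pt = 0"
  shows "g dvd p"
proof (cases "p = 0")
  case False
  have hom: "eval_hom E" and ns: "irreducible_nullstellensatz E"
    using assms(1) unfolding complete_eval_def by auto
  have g_nz: "g \<noteq> 0" using g_sqfree by auto
  show ?thesis
  proof (rule multiplicity_le_imp_dvd[OF g_nz])
    fix q :: 'a
    assume q_prime: "prime q"
    show "multiplicity q g \<le> multiplicity q p"
    proof (cases "q dvd g")
      case True
      then obtain k where g: "g = q * k" by blast
      have "\<forall>pt. E q pt = 0 \<longrightarrow> E p pt = 0" using zeros by (simp add: g eval_homD(4)[OF hom])
      then have "q dvd p"
        using ns q_prime unfolding irreducible_nullstellensatz_def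
        by (simp add: prime_elem_imp_irreducible)
      moreover have "\<not> is_unit q" using q_prime by (simp add: prime_def prime_elem_def)
      ultimately have "multiplicity q p \<ge> 1"
        using False multiplicity_gt_zero_iff[of p q] by simp
      moreover have "multiplicity q g \<le> 1"
        using q_prime squarefree_factorial_semiring''[OF g_nz] g_sqfree by blast
      ultimately show ?thesis by simp
    qed (simp add: not_dvd_imp_multiplicity_0)
  qed
qed simp

section \<open>The Nullstellensatz for squarefree polynomials in \<open>\<complex>[d, x\<^sub>1, x\<^sub>2, x\<^sub>3]\<close>\<close>

text \<open>Evaluation of constants at the one-point space; iterating \<open>lift_eval\<close>
  gives the evaluation of \<open>\<complex>[t\<^sub>1, \<dots>, t\<^sub>n]\<close> on \<open>\<complex>\<^sup>n\<close>.\<close>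
definition eval_const :: "complex \<Rightarrow> unit \<Rightarrow> complex" where
  "eval_const c u = c"

abbreviation eval_poly3 :: "mpoly3 \<Rightarrow> ((unit \<times> complex) \<times> complex) \<times> complex \<Rightarrow> complex" where
  "eval_poly3 \<equiv> lift_eval (lift_eval (lift_eval eval_const))"

abbreviation eval_poly4 :: "mpoly4 \<Rightarrow> (((unit \<times> complex) \<times> complex) \<times> complex) \<times> complex \<Rightarrow> complex" where
  "eval_poly4 \<equiv> lift_eval eval_poly3"

lemma complete_eval_const: "complete_eval eval_const"
  unfolding complete_eval_def eval_hom_def faithful_def irreducible_nullstellensatz_def eval_const_def
  by (auto simp: irreducible_def dvd_field_iff)

lemma complete_eval_poly3: "complete_eval eval_poly3"
  and complete_eval_poly4: "complete_eval eval_poly4"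
  by (simp_all add: complete_eval_lift complete_eval_const)

lemma ev3_eq_eval_poly3: "ev3 f y1 y2 y3 = eval_poly3 f ((((), y3), y2), y1)"
  unfolding ev3_def lift_eval_def eval_const_def by simp

lemma ev4_eq_eval_poly4: "ev4 g d x1 x2 x3 = eval_poly4 g (((((), x3), x2), x1), d)"
  unfolding ev4_def ev3_def lift_eval_def eval_const_def by simp

lemma ev3_hom:
  "ev3 0 y1 y2 y3 = 0" "ev3 1 y1 y2 y3 = 1"
  "ev3 (a + b) y1 y2 y3 = ev3 a y1 y2 y3 + ev3 b y1 y2 y3"
  "ev3 (a * b) y1 y2 y3 = ev3 a y1 y2 y3 * ev3 b y1 y2 y3"
  "ev3 (- a) y1 y2 y3 = - ev3 a y1 y2 y3"
  "ev3 (a ^ n) y1 y2 y3 = ev3 a y1 y2 y3 ^ n"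
  using complete_eval_poly3 unfolding complete_eval_def ev3_eq_eval_poly3
  by (simp_all add: eval_homD eval_hom_uminus eval_hom_power)

theorem squarefree_nullstellensatz4:
  fixes g p :: mpoly4
  assumes "squarefree g"
    and zeros: "\<And>d x1 x2 x3. ev4 g d x1 x2 x3 = 0 \<Longrightarrow> ev4 p d x1 x2 x3 = 0"
  shows "g dvd p"
proof (rule squarefree_nullstellensatz[OF complete_eval_poly4 assms(1)], intro allI impI)
  fix pt :: "(((unit \<times> complex) \<times> complex) \<times> complex) \<times> complex"
  assume "eval_poly4 g pt = 0"
  moreover obtain x3 x2 x1 d where "pt = (((((), x3), x2), x1), d)" by (metis old.unit.exhaust prod.exhaust)
  ultimately show "eval_poly4 p pt = 0" using zeros by (simp add: ev4_eq_eval_poly4)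
qed

section \<open>The reflection \<open>d \<mapsto> -d\<close>\<close>

text \<open>If a polynomial divides its own reflection \<open>g(-d)\<close>, the quotient is the
  constant \<open>(-1)\<^sup>deg g\<close>, so \<open>g\<close> is either even or odd in \<open>d\<close>.\<close>
lemma parity_of_reflection_divisor:
  fixes g :: "'a::{idom,ring_char_0} poly"
  assumes "g dvd pcompose g [:0, -1:]"
  shows "(\<forall>k. odd k \<longrightarrow> coeff g k = 0) \<or> (\<forall>k. even k \<longrightarrow> coeff g k = 0)"
proof (cases "g = 0")
  case False
  obtain c where c: "pcompose g [:0, -1:] = g * c" using assms by (rule dvdE)
  have "pcompose g [:0, -1:] \<noteq> 0" using False by (simp add: pcompose_eq_0_iff)
  then have c_nz: "c \<noteq> 0" using c by auto
  have "degree g + degree c = degree (pcompose g [:0, -1:])"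
    unfolding c using False c_nz by (rule degree_mult_eq[symmetric])
  also have "\<dots> = degree g" by (simp add: degree_pcompose)
  finally have "degree c = 0" by simp
  then obtain c0 where c0: "c = [:c0:]" by (metis degree_0_id)
  have coeffs: "(-1) ^ k * coeff g k = c0 * coeff g k" for k
    using arg_cong[OF c, of "\<lambda>p. coeff p k"] by (simp add: coeff_pcompose_linear c0)
  from coeffs[of "degree g"] False have "c0 = (-1) ^ degree g" by simp
  with coeffs have sign: "(-1) ^ k * coeff g k = (-1) ^ degree g * coeff g k" for k by simp
  show ?thesis
  proof (cases "even (degree g)")
    case True
    then have "odd k \<Longrightarrow> coeff g k = 0" for k using sign[of k] by (simp add: minus_equation_iff)
    then show ?thesis by blast
  next
    case False
    then have "even k \<Longrightarrow> coeff g k = 0" for k using sign[of k] by (simp add: equation_minus_iff)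
    then show ?thesis by blast
  qed
qed simp

lemma ev4_reflect: "ev4 (pcompose g [:0, -1:]) d x1 x2 x3 = ev4 g (- d) x1 x2 x3"
proof -
  let ?E = "\<lambda>p. ev3 p x1 x2 x3"
  have "map_poly ?E (pcompose g [:0, -1:]) = pcompose (map_poly ?E g) [:0, -1:]"
    by (rule poly_eqI) (simp add: coeff_map_poly coeff_pcompose_linear ev3_hom)
  then show ?thesis unfolding ev4_def by (simp add: poly_pcompose)
qed

lemma offset_incidence_reflect:
  "(d, x1, x2, x3) \<in> offset_incidence f \<Longrightarrow> (- d, x1, x2, x3) \<in> offset_incidence f"
  by (simp add: offset_incidence_def)

section \<open>Offset points at distance zero\<close>

text \<open>A complex vector \<open>v\<close> parallel to a non-isotropic vector \<open>n\<close>
  (all \<open>2\<times>2\<close> minors of \<open>(n, v)\<close> vanish) and itself isotropic is zero: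
  writing \<open>H = n\<cdot>n\<close> and \<open>s = n\<cdot>v\<close>, parallelism gives \<open>H v = s n\<close>, so
  \<open>H\<^sup>2 (v\<cdot>v) = s\<^sup>2 H\<close>, whence \<open>s = 0\<close> and then \<open>v = 0\<close>.\<close>
lemma parallel_isotropic_zero:
  fixes a b c v1 v2 v3 :: complex
  assumes "a * v2 - b * v1 = 0" "a * v3 - c * v1 = 0" "b * v3 - c * v2 = 0"
    and isotropic: "v1\<^sup>2 + v2\<^sup>2 + v3\<^sup>2 = 0" and non_isotropic: "a\<^sup>2 + b\<^sup>2 + c\<^sup>2 \<noteq> 0"
  shows "v1 = 0 \<and> v2 = 0 \<and> v3 = 0"
proof -
  define H where "H = a\<^sup>2 + b\<^sup>2 + c\<^sup>2"
  define s where "s = a * v1 + b * v2 + c * v3"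
  have "H * v1 - s * a = b * (b * v1 - a * v2) + c * (c * v1 - a * v3)"
    "H * v2 - s * b = a * (a * v2 - b * v1) + c * (c * v2 - b * v3)"
    "H * v3 - s * c = a * (a * v3 - c * v1) + b * (b * v3 - c * v2)"
    unfolding H_def s_def by (simp_all add: algebra_simps power2_eq_square)
  then have parallel: "H * v1 = s * a" "H * v2 = s * b" "H * v3 = s * c"
    using assms(1-3) by simp_all
  have "H\<^sup>2 * (v1\<^sup>2 + v2\<^sup>2 + v3\<^sup>2) = (H * v1)\<^sup>2 + (H * v2)\<^sup>2 + (H * v3)\<^sup>2"
    by (simp add: algebra_simps power2_eq_square)
  also have "\<dots> = (s * a)\<^sup>2 + (s * b)\<^sup>2 + (s * c)\<^sup>2" by (simp only: parallel)
  also have "\<dots> = s\<^sup>2 * H" unfolding H_def by (simp add: algebra_simps power2_eq_square)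
  finally have "s = 0" using isotropic non_isotropic unfolding H_def by simp
  then show ?thesis using parallel non_isotropic unfolding H_def by simp
qed

text \<open>A point of the incidence set with \<open>d = 0\<close> lies on \<open>\<Sigma>\<close> (at a regular
  point \<open>y\<close>, since the normal \<open>\<nabla>f(y)\<close> is non-isotropic), and the whole normal line
  \<open>x + s \<nabla>f(y)\<close> belongs to the incidence set, with distance \<open>s r\<close>, \<open>r\<^sup>2 = h(y)\<close>.\<close>
lemma offset_incidence_normal_line:
  assumes "(0, x1, x2, x3) \<in> offset_incidence f"
  obtains r a1 a2 a3 where "r \<noteq> 0"
    "\<And>s. (s * r, x1 + s * a1, x2 + s * a2, x3 + s * a3) \<in> offset_incidence f"
proof -
  obtain y1 y2 y3 u where on_surface: "ev3 f y1 y2 y3 = 0" and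
    m1: "ev3 (pd1 f) y1 y2 y3 * (x2 - y2) - ev3 (pd2 f) y1 y2 y3 * (x1 - y1) = 0" and
    m2: "ev3 (pd1 f) y1 y2 y3 * (x3 - y3) - ev3 (pd3 f) y1 y2 y3 * (x1 - y1) = 0" and
    m3: "ev3 (pd2 f) y1 y2 y3 * (x3 - y3) - ev3 (pd3 f) y1 y2 y3 * (x2 - y2) = 0" and
    dist: "(x1 - y1)\<^sup>2 + (x2 - y2)\<^sup>2 + (x3 - y3)\<^sup>2 - 0\<^sup>2 = 0" and
    regular: "u * ev3 (h_imp f) y1 y2 y3 - 1 = 0"
    using assms unfolding offset_incidence_def by blast
  define a1 a2 a3 where "a1 = ev3 (pd1 f) y1 y2 y3" and "a2 = ev3 (pd2 f) y1 y2 y3"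
    and "a3 = ev3 (pd3 f) y1 y2 y3"
  have "ev3 (h_imp f) y1 y2 y3 = a1\<^sup>2 + a2\<^sup>2 + a3\<^sup>2"
    unfolding h_imp_def a1_def a2_def a3_def by (simp add: ev3_hom)
  then have H_nz: "a1\<^sup>2 + a2\<^sup>2 + a3\<^sup>2 \<noteq> 0" using regular by auto
  have "x1 - y1 = 0 \<and> x2 - y2 = 0 \<and> x3 - y3 = 0"
    by (rule parallel_isotropic_zero[of a1 "x2 - y2" a2 "x1 - y1" "x3 - y3" a3])
       (use m1 m2 m3 dist H_nz in \<open>simp_all add: a1_def a2_def a3_def\<close>)
  then have x: "x1 = y1" "x2 = y2" "x3 = y3" by simp_all
  define r where "r = csqrt (a1\<^sup>2 + a2\<^sup>2 + a3\<^sup>2)"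
  have r_sq: "r\<^sup>2 = a1\<^sup>2 + a2\<^sup>2 + a3\<^sup>2" unfolding r_def by simp
  have "(s * r, x1 + s * a1, x2 + s * a2, x3 + s * a3) \<in> offset_incidence f" for s
    unfolding offset_incidence_def x
  proof (clarify, intro exI conjI)
    show "(y1 + s * a1 - y1)\<^sup>2 + (y2 + s * a2 - y2)\<^sup>2 + (y3 + s * a3 - y3)\<^sup>2 - (s * r)\<^sup>2 = 0"
      by (simp add: power_mult_distrib r_sq algebra_simps)
  qed (use on_surface regular in \<open>simp_all add: a1_def a2_def a3_def algebra_simps\<close>)
  moreover have "r \<noteq> 0" using r_sq H_nz by auto
  ultimately show ?thesis using that by blast
qed

text \<open>Evaluating a polynomial along a continuous curve gives a continuous function;
  it suffices to write \<open>poly\<close> as a finite sum over the coefficients.\<close>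
lemma poly_map_poly_as_sum:
  fixes F :: "'a::zero \<Rightarrow> 'b::comm_semiring_1"
  assumes "F 0 = 0"
  shows "poly (map_poly F p) z = (\<Sum>i\<le>degree p. F (coeff p i) * z ^ i)"
proof -
  have "poly (map_poly F p) z = (\<Sum>i\<le>degree (map_poly F p). coeff (map_poly F p) i * z ^ i)"
    by (rule poly_altdef)
  also have "\<dots> = (\<Sum>i\<le>degree p. coeff (map_poly F p) i * z ^ i)"
    by (rule sum.mono_neutral_left) (auto simp: coeff_eq_0 map_poly_degree_leq)
  also have "\<dots> = (\<Sum>i\<le>degree p. F (coeff p i) * z ^ i)" by (simp add: coeff_map_poly assms)
  finally show ?thesis .
qed

lemma isCont_poly_map_poly:
  fixes F :: "complex \<Rightarrow> 'a::zero \<Rightarrow> complex"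
  assumes "\<And>s. F s 0 = 0" "\<And>c. isCont (\<lambda>s. F s c) s0" "isCont z s0"
  shows "isCont (\<lambda>s. poly (map_poly (F s) p) (z s)) s0"
  unfolding poly_map_poly_as_sum[of "F _", OF assms(1)]
  using assms(2,3) by (intro continuous_intros)

lemma isCont_ev4:
  fixes s0 :: complex
  assumes "isCont D s0" "isCont X1 s0" "isCont X2 s0" "isCont X3 s0"
  shows "isCont (\<lambda>s. ev4 h (D s) (X1 s) (X2 s) (X3 s)) s0"
proof -
  have c1: "isCont (\<lambda>s. poly r (X3 s)) s0" for r :: "complex poly"
    using isCont_poly_map_poly[of "\<lambda>s x. x" s0 X3 r] assms by simp
  have c2: "isCont (\<lambda>s. poly (map_poly (\<lambda>r. poly r (X3 s)) q) (X2 s)) s0" for q :: "complex poly poly"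
    by (rule isCont_poly_map_poly) (use c1 assms in auto)
  have c3: "isCont (\<lambda>s. ev3 c (X1 s) (X2 s) (X3 s)) s0" for c
    unfolding ev3_def by (rule isCont_poly_map_poly) (use c2 assms in auto)
  show ?thesis
    unfolding ev4_def by (rule isCont_poly_map_poly) (use c3 assms in \<open>auto simp: ev3_hom\<close>)
qed

lemma isCont_vanishing_off_zero:
  fixes \<phi> :: "complex \<Rightarrow> complex"
  assumes "isCont \<phi> 0" "\<And>s. s \<noteq> 0 \<Longrightarrow> \<phi> s = 0"
  shows "\<phi> 0 = 0"
proof -
  have "(\<phi> \<longlongrightarrow> \<phi> 0) (at 0)" using assms(1) isCont_def by blast
  moreover have "\<forall>\<^sub>F s in at 0. \<phi> s = 0" using assms(2) by (auto simp: eventually_at_filter)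
  ultimately have "((\<lambda>s. 0) \<longlongrightarrow> \<phi> 0) (at (0::complex))"
    by (rule Lim_transform_eventually)
  then show ?thesis using LIM_const_eq by fastforce
qed

text \<open>The incidence set is the closure of its part with \<open>d \<noteq> 0\<close>; hence a factor
  \<open>d\<close> can be cancelled from a polynomial vanishing on it.\<close>
lemma offset_incidence_cancel_d:
  assumes vanish: "\<And>d x1 x2 x3. (d, x1, x2, x3) \<in> offset_incidence f \<Longrightarrow> ev4 (pCons 0 h) d x1 x2 x3 = 0"
    and pt: "(d, x1, x2, x3) \<in> offset_incidence f"
  shows "ev4 h d x1 x2 x3 = 0"
proof -
  have ev4_times_d: "ev4 (pCons 0 h) d x1 x2 x3 = d * ev4 h d x1 x2 x3" for h d x1 x2 x3
    unfolding ev4_def by (simp add: map_poly_pCons ev3_hom)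
  have off_zero: "ev4 h d x1 x2 x3 = 0" if "(d, x1, x2, x3) \<in> offset_incidence f" "d \<noteq> 0" for d x1 x2 x3
    using vanish[OF that(1)] that(2) by (simp add: ev4_times_d)
  show ?thesis
  proof (cases "d = 0")
    case True
    obtain r a1 a2 a3 where r_nz: "r \<noteq> 0"
      and line: "\<And>s. (s * r, x1 + s * a1, x2 + s * a2, x3 + s * a3) \<in> offset_incidence f"
      using offset_incidence_normal_line pt True by blast
    define \<phi> where "\<phi> s = ev4 h (s * r) (x1 + s * a1) (x2 + s * a2) (x3 + s * a3)" for s
    have "isCont \<phi> 0" unfolding \<phi>_def by (intro isCont_ev4 continuous_intros)
    moreover have "\<phi> s = 0" if "s \<noteq> 0" for s
      unfolding \<phi>_def using off_zero[OF line] that r_nz by simp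
    ultimately have "\<phi> 0 = 0" by (rule isCont_vanishing_off_zero)
    then show ?thesis unfolding \<phi>_def True by simp
  qed (use off_zero pt in blast)
qed

section \<open>The generic offset polynomial\<close>

lemma offset_incidence_zero:
  assumes "zero_set4 g = generic_offset f" and "(d, x1, x2, x3) \<in> offset_incidence f"
  shows "ev4 g d x1 x2 x3 = 0"
  using assms unfolding generic_offset_def zariski_closure4_def zero_set4_def by blast

lemma offset_vanishing_imp_dvd:
  assumes g_sqfree: "squarefree g" and g_defines: "zero_set4 g = generic_offset f"
    and vanish: "\<And>d x1 x2 x3. (d, x1, x2, x3) \<in> offset_incidence f \<Longrightarrow> ev4 p d x1 x2 x3 = 0"
  shows "g dvd p"
proof (rule squarefree_nullstellensatz4[OF g_sqfree])
  fix d x1 x2 x3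
  assume "ev4 g d x1 x2 x3 = 0"
  then have "(d, x1, x2, x3) \<in> zariski_closure4 (offset_incidence f)"
    using g_defines unfolding zero_set4_def generic_offset_def by auto
  moreover have "offset_incidence f \<subseteq> zero_set4 p" using vanish unfolding zero_set4_def by auto
  ultimately show "ev4 p d x1 x2 x3 = 0" unfolding zariski_closure4_def zero_set4_def by auto
qed

theorem mainTheorem9:
  fixes f :: mpoly3 and g :: mpoly4
  assumes f_irred: "irreducible f"
    and h_nonzero: "\<exists>y1 y2 y3. ev3 f y1 y2 y3 = 0 \<and> ev3 (h_imp f) y1 y2 y3 \<noteq> 0"
    and g_sqfree: "squarefree g"
    and g_defines: "zero_set4 g = generic_offset f"
  shows "\<forall>k. odd k \<longrightarrow> coeff g k = 0"
proof -
  note g_vanishes = offset_incidence_zero[OF g_defines]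
  note dvd_g = offset_vanishing_imp_dvd[OF g_sqfree g_defines]
  have "g dvd pcompose g [:0, -1:]"
    by (rule dvd_g) (simp add: ev4_reflect g_vanishes offset_incidence_reflect)
  then consider "\<forall>k. odd k \<longrightarrow> coeff g k = 0" | "\<forall>k. even k \<longrightarrow> coeff g k = 0"
    using parity_of_reflection_divisor by blast
  then show ?thesis
  proof cases
    case 1
    then show ?thesis .
  next
    case 2
    (* then g = d h, where h still vanishes on the incidence set; so g divides h,
       which is impossible for degree reasons *)
    obtain h where g: "g = pCons 0 h" using 2 by (metis coeff_pCons_0 even_zero pCons_cases)
    have "g dvd h" by (rule dvd_g, rule offset_incidence_cancel_d) (use g_vanishes g in auto)
    moreover have "h \<noteq> 0" using g_sqfree g by auto
    ultimately have "degree g \<le> degree h" by (rule dvd_imp_degree_le)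
    then show ?thesis using \<open>h \<noteq> 0\<close> by (simp add: g)
  qed
qed

end
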